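(* Let $t$ be a positive integer, let $M$ be a matroid with the $(t,2t)$-property, and let $(S_1,\ldots, S_n)$ be a $t$-echidna of $M$ with $n\geq3t-1$. Let $I$ be a $(t-1)$-element subset of $\{1,\dots,n\}$. Then for every $z\in E(M)-\bigcup_{i \in I}S_i$, there is a $2t$-element circuit of $M$ and a $2t$-element cocircuit of $M$ each containing $\{z\} \cup \bigcup_{i \in I}S_i$.
   Context: A matroid $M$ has the $(t,2t)$-property if every $t$-element subset of $E(M)$ is contained in both a $2t$-element circuit and a $2t$-element cocircuit of $M$. A $t$-echidna of order $n$ of $M$ is a partition $(S_1,\ldots,S_n)$ of a subset of $E(M)$ such that $|S_i|=2$ for all $i\in\{1,\dots,n\}$, and $\bigcup_{i\in I}S_i$ is a circuit of $M$ for every $I\subseteq\{1,\dots,n\}$ with $|I|=t$. *)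

theory Defs
  imports Main
begin

definition matroid :: "'a set \<Rightarrow> ('a set \<Rightarrow> bool) \<Rightarrow> bool" where
  "matroid E indep \<longleftrightarrow>
     finite E \<and>
     (\<forall>X. indep X \<longrightarrow> X \<subseteq> E) \<and>
     indep {} \<and>
     (\<forall>X Y. indep Y \<and> X \<subseteq> Y \<longrightarrow> indep X) \<and>
     (\<forall>X Y. indep X \<and> indep Y \<and> card X < card Y \<longrightarrow>
        (\<exists>y\<in>Y - X. indep (insert y X)))"

definition circuit :: "'a set \<Rightarrow> ('a set \<Rightarrow> bool) \<Rightarrow> 'a set \<Rightarrow> bool" where
  "circuit E indep C \<longleftrightarrow> C \<subseteq> E \<and> \<not> indep C \<and> (\<forall>X. X \<subset> C \<longrightarrow> indep X)"

definition basis :: "'a set \<Rightarrow> ('a set \<Rightarrow> bool) \<Rightarrow> 'a set \<Rightarrow> bool" where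
  "basis E indep B \<longleftrightarrow> indep B \<and> (\<forall>X. indep X \<and> B \<subseteq> X \<longrightarrow> X = B)"

definition dual_indep :: "'a set \<Rightarrow> ('a set \<Rightarrow> bool) \<Rightarrow> 'a set \<Rightarrow> bool" where
  "dual_indep E indep X \<longleftrightarrow> X \<subseteq> E \<and> (\<exists>B. basis E indep B \<and> X \<subseteq> E - B)"

definition cocircuit :: "'a set \<Rightarrow> ('a set \<Rightarrow> bool) \<Rightarrow> 'a set \<Rightarrow> bool" where
  "cocircuit E indep C \<longleftrightarrow> circuit E (dual_indep E indep) C"

definition tt_property :: "'a set \<Rightarrow> ('a set \<Rightarrow> bool) \<Rightarrow> nat \<Rightarrow> bool" where
  "tt_property E indep t \<longleftrightarrow>
     (\<forall>X. X \<subseteq> E \<and> card X = t \<longrightarrow>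
        (\<exists>C. circuit E indep C \<and> card C = 2 * t \<and> X \<subseteq> C) \<and>
        (\<exists>D. cocircuit E indep D \<and> card D = 2 * t \<and> X \<subseteq> D))"

definition echidna :: "'a set \<Rightarrow> ('a set \<Rightarrow> bool) \<Rightarrow> nat \<Rightarrow> (nat \<Rightarrow> 'a set) \<Rightarrow> nat \<Rightarrow> bool" where
  "echidna E indep t S n \<longleftrightarrow>
     (\<forall>i\<in>{1..n}. S i \<subseteq> E \<and> card (S i) = 2) \<and>
     (\<forall>i\<in>{1..n}. \<forall>j\<in>{1..n}. i \<noteq> j \<longrightarrow> S i \<inter> S j = {}) \<and>
     (\<forall>J. J \<subseteq> {1..n} \<and> card J = t \<longrightarrow> circuit E indep (\<Union>i\<in>J. S i))"

end

theory Submission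
  imports Defs "HOL-Library.Disjoint_Sets"
begin

text \<open>
  A circuit and a cocircuit never meet in exactly one element. If a set X of size 2t met a
  pair S i in a single element x, then, since X meets at most 2t - 1 of the other pairs and
  n \<ge> 3t - 1, some t - 1 further pairs avoid X, and with S i they form t pairs whose union
  meets X exactly in x. Against the circuits of the echidna this shows that a 2t-element
  cocircuit meeting a pair contains it; so the cocircuit through a transversal of any t pairs
  given by the (t,2t)-property is their union, and against these cocircuits a 2t-element circuit
  meeting a pair contains it too. It remains to apply the (t,2t)-property to z together with a
  transversal of the pairs indexed by I.
\<close>

lemma disjoint_family_on_transversal:
  assumes disj: "disjoint_family_on A I" and nonempty: "\<And>i. i \<in> I \<Longrightarrow> A i \<noteq> {}"
  obtains r where "\<And>i. i \<in> I \<Longrightarrow> r i \<in> A i" and "inj_on r I"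
proof
  define r where "r i = (SOME x. x \<in> A i)" for i
  show r_in: "r i \<in> A i" if "i \<in> I" for i
    using nonempty[OF that] unfolding r_def by (meson ex_in_conv someI_ex)
  show "inj_on r I"
  proof (rule inj_onI)
    fix i j assume "i \<in> I" "j \<in> I" "r i = r j"
    then have "A i \<inter> A j \<noteq> {}" using r_in by (metis disjoint_iff)
    with disj \<open>i \<in> I\<close> \<open>j \<in> I\<close> show "i = j" unfolding disjoint_family_on_def by blast
  qed
qed

lemma card_indices_meeting_le:
  assumes disj: "disjoint_family_on A I" and "finite X"
  shows "card {i \<in> I. A i \<inter> X \<noteq> {}} \<le> card X"
proof -
  let ?K = "{i \<in> I. A i \<inter> X \<noteq> {}}"
  have "disjoint_family_on (\<lambda>i. A i \<inter> X) ?K"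
    using disj unfolding disjoint_family_on_def by blast
  then obtain r where r: "\<And>i. i \<in> ?K \<Longrightarrow> r i \<in> A i \<inter> X" and "inj_on r ?K"
    by (rule disjoint_family_on_transversal) auto
  moreover have "r ` ?K \<subseteq> X" using r by blast
  ultimately show ?thesis using card_inj_on_le \<open>finite X\<close> by blast
qed

lemma card_UN_pairs:
  assumes "disjoint_family_on S J" and "\<And>i. i \<in> J \<Longrightarrow> card (S i) = 2" and "finite J"
  shows "card (\<Union>i\<in>J. S i) = 2 * card J"
proof -
  have "card (\<Union>i\<in>J. S i) = (\<Sum>i\<in>J. card (S i))"
    using assms by (intro card_UN_disjoint') (auto intro: card_ge_0_finite)
  also have "\<dots> = 2 * card J" using assms(2) by simp
  finally show ?thesis .
qed

lemma pair_subset_if_no_singleton_meet: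
  assumes pairs: "\<And>i. i \<in> {1..n} \<Longrightarrow> card (S i) = 2"
    and disj: "disjoint_family_on S {1..n}"
    and X: "finite X" "card X = 2 * t" and n: "3 * t - 1 \<le> n"
    and no_singleton: "\<And>J x. J \<subseteq> {1..n} \<Longrightarrow> card J = t \<Longrightarrow> (\<Union>j\<in>J. S j) \<inter> X \<noteq> {x}"
    and i: "i \<in> {1..n}" and meets: "S i \<inter> X \<noteq> {}"
  shows "S i \<subseteq> X"
proof (rule ccontr)
  assume "\<not> S i \<subseteq> X"
  moreover obtain a b where "S i = {a, b}" "a \<noteq> b" using pairs[OF i] by (meson card_2_iff)
  ultimately obtain x where x: "S i \<inter> X = {x}" using meets by auto
  then have "x \<in> X" by blast
  then have "t \<noteq> 0" using X by (metis card_0_eq empty_iff mult_0_right)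
  let ?others = "{1..n} - {i}"
  define K where "K = {j \<in> ?others. S j \<inter> X \<noteq> {}}"
  have "card K = card {j \<in> ?others. S j \<inter> (X - {x}) \<noteq> {}}"
    using disj i x unfolding K_def disjoint_family_on_def by (intro arg_cong[where f = card]) blast
  also have "\<dots> \<le> card (X - {x})"
    by (intro card_indices_meeting_le disjoint_family_on_mono[OF Diff_subset disj]) (use X in simp)
  also have "\<dots> = 2 * t - 1" using \<open>x \<in> X\<close> X by simp
  finally have "t - 1 \<le> card (?others - K)"
    using n i \<open>t \<noteq> 0\<close> by (subst card_Diff_subset) (auto simp: K_def)
  then obtain J' where J': "J' \<subseteq> ?others - K" "card J' = t - 1"
    by (meson obtain_subset_with_card_n)
  have "finite J'" "i \<notin> J'" using J' finite_subset[of J' "{1..n}"] by auto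
  then have "card (insert i J') = t" using J'(2) \<open>t \<noteq> 0\<close> by simp
  moreover have "(\<Union>j\<in>insert i J'. S j) \<inter> X = {x}" using J' x unfolding K_def by blast
  ultimately show False using no_singleton J' i by blast
qed

lemma matroidD:
  assumes "matroid E indep"
  shows matroid_finite: "finite E"
    and indep_subset_ground: "indep X \<Longrightarrow> X \<subseteq> E"
    and indep_subset: "indep Y \<Longrightarrow> X \<subseteq> Y \<Longrightarrow> indep X"
    and indep_augment: "indep X \<Longrightarrow> indep Y \<Longrightarrow> card X < card Y \<Longrightarrow> \<exists>y\<in>Y - X. indep (insert y X)"
  using assms unfolding matroid_def by blast+

lemma indep_finite: "matroid E indep \<Longrightarrow> indep X \<Longrightarrow> finite X"
  by (meson finite_subset indep_subset_ground matroid_finite)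

lemma card_le_basis:
  assumes m: "matroid E indep" and B: "basis E indep B" and X: "indep X"
  shows "card X \<le> card B"
proof (rule ccontr)
  assume "\<not> card X \<le> card B"
  then obtain y where "y \<in> X - B" "indep (insert y B)"
    using indep_augment[OF m _ X] B unfolding basis_def by (meson not_le)
  then show False using B unfolding basis_def by blast
qed

lemma indep_extend_to_basis_within:
  assumes m: "matroid E indep" and B: "basis E indep B" and X: "indep X"
  obtains M where "basis E indep M" and "X \<subseteq> M" and "M \<subseteq> X \<union> B"
proof -
  define P where "P M \<longleftrightarrow> indep M \<and> X \<subseteq> M \<and> M \<subseteq> X \<union> B" for M
  have "card M < card E + 1" if "P M" for M
  proof -
    have "M \<subseteq> E" using that indep_subset_ground[OF m] unfolding P_def by blast
    then show ?thesis using card_mono[OF matroid_finite[OF m]] by (simp add: le_imp_less_Suc)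
  qed
  moreover have "P X" using X unfolding P_def by blast
  ultimately obtain M where PM: "P M" and M_max: "\<And>M'. P M' \<Longrightarrow> card M' \<le> card M"
    using ex_has_greatest_nat[of P X card "card E + 1"] by blast
  have M: "indep M" using PM unfolding P_def by blast
  have "card B \<le> card M"
  proof (rule ccontr)
    assume "\<not> card B \<le> card M"
    then obtain y where "y \<in> B - M" "indep (insert y M)"
      using indep_augment[OF m M] B unfolding basis_def by (meson not_le)
    then have "P (insert y M)" using PM unfolding P_def by blast
    then have "card (insert y M) \<le> card M" by (rule M_max)
    then show False using \<open>y \<in> B - M\<close> indep_finite[OF m M] by simp
  qed
  have "basis E indep M"
    unfolding basis_def
  proof (intro conjI allI impI)
    fix Y assume Y: "indep Y \<and> M \<subseteq> Y"
    then have "card Y \<le> card M" using card_le_basis[OF m B] \<open>card B \<le> card M\<close> by fastforce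
    then show "Y = M" using Y indep_finite[OF m] by (metis card_seteq)
  qed (rule M)
  then show ?thesis using that PM unfolding P_def by blast
qed

lemma circuit_cocircuit_inter_not_singleton:
  assumes m: "matroid E indep" and C: "circuit E indep C" and D: "cocircuit E indep D"
  shows "C \<inter> D \<noteq> {e}"
proof
  assume CD: "C \<inter> D = {e}"
  have DE: "D \<subseteq> E" and D_dep: "\<not> dual_indep E indep D"
    and "dual_indep E indep (D - {e})"
    using D CD unfolding cocircuit_def circuit_def by blast+
  then obtain B where B: "basis E indep B" and DB: "D - {e} \<subseteq> E - B"
    unfolding dual_indep_def by blast
  have "indep (C - {e})" using C CD unfolding circuit_def by blast
  then obtain M where M: "basis E indep M" "C - {e} \<subseteq> M" "M \<subseteq> (C - {e}) \<union> B"
    using indep_extend_to_basis_within[OF m B] by blast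
  have "e \<notin> M"
  proof
    assume "e \<in> M"
    then have "C \<subseteq> M" using M(2) by blast
    then show False using C M(1) indep_subset[OF m] unfolding circuit_def basis_def by blast
  qed
  then have "D \<subseteq> E - M" using M(3) CD DB DE by blast
  then show False using D_dep M(1) DE unfolding dual_indep_def by blast
qed

lemma circuit_finite: "matroid E indep \<Longrightarrow> circuit E indep C \<Longrightarrow> finite C"
  unfolding circuit_def by (meson finite_subset matroid_finite)

lemma cocircuit_finite: "matroid E indep \<Longrightarrow> cocircuit E indep D \<Longrightarrow> finite D"
  unfolding cocircuit_def circuit_def by (meson finite_subset matroid_finite)

lemma tt_propertyD:
  "tt_property E indep t \<Longrightarrow> X \<subseteq> E \<Longrightarrow> card X = t \<Longrightarrow>
     (\<exists>C. circuit E indep C \<and> card C = 2 * t \<and> X \<subseteq> C) \<and>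
     (\<exists>D. cocircuit E indep D \<and> card D = 2 * t \<and> X \<subseteq> D)"
  unfolding tt_property_def by blast

lemma echidnaD:
  assumes "echidna E indep t S n"
  shows echidna_subset_ground: "i \<in> {1..n} \<Longrightarrow> S i \<subseteq> E"
    and echidna_card: "i \<in> {1..n} \<Longrightarrow> card (S i) = 2"
    and echidna_disjoint: "disjoint_family_on S {1..n}"
    and echidna_circuit: "J \<subseteq> {1..n} \<Longrightarrow> card J = t \<Longrightarrow> circuit E indep (\<Union>i\<in>J. S i)"
  using assms unfolding echidna_def disjoint_family_on_def by blast+

lemma echidna_transversal:
  assumes "echidna E indep t S n"
  obtains r where "\<And>i. i \<in> {1..n} \<Longrightarrow> r i \<in> S i" and "inj_on r {1..n}"
  using disjoint_family_on_transversal[OF echidna_disjoint[OF assms]] echidna_card[OF assms]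
  by (metis card.empty zero_neq_numeral)

context
  fixes E :: "'a set" and indep :: "'a set \<Rightarrow> bool" and t n :: nat and S :: "nat \<Rightarrow> 'a set"
  assumes m: "matroid E indep" and ech: "echidna E indep t S n" and n: "3 * t - 1 \<le> n"
begin

lemma echidna_cocircuit_contains_pair:
  assumes D: "cocircuit E indep D" "card D = 2 * t"
    and i: "i \<in> {1..n}" "S i \<inter> D \<noteq> {}"
  shows "S i \<subseteq> D"
proof (rule pair_subset_if_no_singleton_meet[OF echidna_card[OF ech] echidna_disjoint[OF ech]
      cocircuit_finite[OF m D(1)] D(2) n _ i])
  show "(\<Union>j\<in>J. S j) \<inter> D \<noteq> {x}" if "J \<subseteq> {1..n}" "card J = t" for J x
    using that by (rule circuit_cocircuit_inter_not_singleton[OF m echidna_circuit[OF ech] D(1)])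
qed

lemma echidna_union_cocircuit:
  assumes tt: "tt_property E indep t" and J: "J \<subseteq> {1..n}" "card J = t"
  shows "cocircuit E indep (\<Union>i\<in>J. S i)"
proof -
  obtain r where r: "\<And>i. i \<in> {1..n} \<Longrightarrow> r i \<in> S i" and "inj_on r {1..n}"
    using echidna_transversal[OF ech] by blast
  then have "card (r ` J) = t" using J by (metis card_image inj_on_subset)
  moreover have "r ` J \<subseteq> E" using r J echidna_subset_ground[OF ech] by blast
  ultimately obtain D where D: "cocircuit E indep D" "card D = 2 * t" "r ` J \<subseteq> D"
    using tt_propertyD[OF tt, of "r ` J"] by blast
  have sub: "(\<Union>i\<in>J. S i) \<subseteq> D"
    using echidna_cocircuit_contains_pair[OF D(1,2)] r J D(3) by blast
  have "card (\<Union>i\<in>J. S i) = 2 * card J"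
    using J(1) echidna_card[OF ech] finite_subset[OF J(1)]
    by (intro card_UN_pairs disjoint_family_on_mono[OF J(1) echidna_disjoint[OF ech]]) auto
  then have "(\<Union>i\<in>J. S i) = D"
    using card_seteq[OF cocircuit_finite[OF m D(1)] sub] J(2) D(2) by simp
  then show ?thesis using D(1) by simp
qed

lemma echidna_circuit_contains_pair:
  assumes tt: "tt_property E indep t"
    and C: "circuit E indep C" "card C = 2 * t"
    and i: "i \<in> {1..n}" "S i \<inter> C \<noteq> {}"
  shows "S i \<subseteq> C"
proof (rule pair_subset_if_no_singleton_meet[OF echidna_card[OF ech] echidna_disjoint[OF ech]
      circuit_finite[OF m C(1)] C(2) n _ i])
  show "(\<Union>j\<in>J. S j) \<inter> C \<noteq> {x}" if "J \<subseteq> {1..n}" "card J = t" for J x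
    using circuit_cocircuit_inter_not_singleton[OF m C(1) echidna_union_cocircuit[OF tt that]]
    by (simp add: inf_commute)
qed

end

theorem lemma4p4:
  fixes E :: "'a set" and indep :: "'a set \<Rightarrow> bool" and t n :: nat
    and S :: "nat \<Rightarrow> 'a set" and I :: "nat set"
  assumes "0 < t"
    and "matroid E indep"
    and "tt_property E indep t"
    and "echidna E indep t S n"
    and "n \<ge> 3 * t - 1"
    and "I \<subseteq> {1..n}" and "card I = t - 1"
  shows "\<forall>z \<in> E - (\<Union>i\<in>I. S i).
           (\<exists>C. circuit E indep C \<and> card C = 2 * t \<and> insert z (\<Union>i\<in>I. S i) \<subseteq> C) \<and>
           (\<exists>D. cocircuit E indep D \<and> card D = 2 * t \<and> insert z (\<Union>i\<in>I. S i) \<subseteq> D)"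
proof
  fix z assume z: "z \<in> E - (\<Union>i\<in>I. S i)"
  obtain r where r: "\<And>i. i \<in> {1..n} \<Longrightarrow> r i \<in> S i" and "inj_on r {1..n}"
    using echidna_transversal[OF assms(4)] by blast
  define Y where "Y = insert z (r ` I)"
  have "card (r ` I) = t - 1" using \<open>inj_on r {1..n}\<close> assms(6,7) by (metis card_image inj_on_subset)
  moreover have "z \<notin> r ` I" using z r assms(6) by blast
  moreover have "finite (r ` I)" using finite_subset[OF assms(6)] by blast
  ultimately have "card Y = t" unfolding Y_def using assms(1) by simp
  moreover have "Y \<subseteq> E" unfolding Y_def using z r assms(6) echidna_subset_ground[OF assms(4)] by blast
  ultimately obtain C D where C: "circuit E indep C" "card C = 2 * t" "Y \<subseteq> C"
    and D: "cocircuit E indep D" "card D = 2 * t" "Y \<subseteq> D"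
    using tt_propertyD[OF assms(3), of Y] by blast
  have cover: "insert z (\<Union>i\<in>I. S i) \<subseteq> X"
    if "Y \<subseteq> X" and "\<And>i. i \<in> {1..n} \<Longrightarrow> S i \<inter> X \<noteq> {} \<Longrightarrow> S i \<subseteq> X" for X
    using that r assms(6) unfolding Y_def by blast
  have "insert z (\<Union>i\<in>I. S i) \<subseteq> C"
    by (rule cover[OF C(3) echidna_circuit_contains_pair[OF assms(2,4,5,3) C(1,2)]])
  moreover have "insert z (\<Union>i\<in>I. S i) \<subseteq> D"
    by (rule cover[OF D(3) echidna_cocircuit_contains_pair[OF assms(2,4,5) D(1,2)]])
  ultimately show "(\<exists>C. circuit E indep C \<and> card C = 2 * t \<and> insert z (\<Union>i\<in>I. S i) \<subseteq> C) \<and>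
        (\<exists>D. cocircuit E indep D \<and> card D = 2 * t \<and> insert z (\<Union>i\<in>I. S i) \<subseteq> D)"
    using C(1,2) D(1,2) by blast
qed

end
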